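(* Let $P$ be a finite poset and $Q$ a poset ideal of $P$. Then the following are equivalent: (1) $\tilde\chi(\{y\in Q\mid y<x\})=0$ for every $x\in(P\cup\{\infty\})\setminus Q$; (2) $\tilde\chi((-\infty,x)_P)=0$ for every $x\in(P\cup\{\infty\})\setminus Q$.
   Context: A poset ideal is a downward closed subset. $\infty$ (resp. $-\infty$) is a new element larger (resp. smaller) than all elements of $P$, and $(-\infty,x)_P=\{z\in P:z<x\}$. For a finite poset $S$, $\tilde\chi(S)=\sum_{\sigma}(-1)^{|\sigma|-1}$, the sum over all chains $\sigma$ of $S$ including the empty chain. *)

theory Defs
  imports Main
begin

definition finite_poset :: "'a set \<Rightarrow> ('a \<Rightarrow> 'a \<Rightarrow> bool) \<Rightarrow> bool" where
  "finite_poset P le \<longleftrightarrow> finite P \<and>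
     (\<forall>x\<in>P. le x x) \<and>
     (\<forall>x\<in>P. \<forall>y\<in>P. le x y \<and> le y x \<longrightarrow> x = y) \<and>
     (\<forall>x\<in>P. \<forall>y\<in>P. \<forall>z\<in>P. le x y \<and> le y z \<longrightarrow> le x z)"

definition poset_ideal :: "'a set \<Rightarrow> ('a \<Rightarrow> 'a \<Rightarrow> bool) \<Rightarrow> 'a set \<Rightarrow> bool" where
  "poset_ideal P le Q \<longleftrightarrow> Q \<subseteq> P \<and> (\<forall>x\<in>Q. \<forall>y\<in>P. le y x \<longrightarrow> y \<in> Q)"

definition chains_of :: "'a set \<Rightarrow> ('a \<Rightarrow> 'a \<Rightarrow> bool) \<Rightarrow> 'a set set" where
  "chains_of S le = {\<sigma>. \<sigma> \<subseteq> S \<and> (\<forall>x\<in>\<sigma>. \<forall>y\<in>\<sigma>. le x y \<or> le y x)}"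

text \<open>Reduced Euler characteristic: sum over chains of (-1)^(|sigma|-1),
  the empty chain contributing (-1)^(-1) = -1.\<close>
definition red_euler :: "'a set \<Rightarrow> ('a \<Rightarrow> 'a \<Rightarrow> bool) \<Rightarrow> int" where
  "red_euler S le = (\<Sum>\<sigma>\<in>chains_of S le. - ((-1) ^ card \<sigma>))"

text \<open>Strict order on P extended by a top element infinity = None.\<close>
fun ext_less :: "('a \<Rightarrow> 'a \<Rightarrow> bool) \<Rightarrow> 'a option \<Rightarrow> 'a option \<Rightarrow> bool" where
  "ext_less le (Some a) (Some b) = (le a b \<and> a \<noteq> b)"
| "ext_less le (Some a) None = True"
| "ext_less le None _ = False"

end

theory Submission
  imports Defs
begin

text \<open>A chain of (-\<infinity>, x)_P that meets P - Q has a least element m outside the ideal Q, and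
  it splits at m into a chain of (-\<infinity>, m)_Q and a chain of T_m = {z \<in> P - Q. m < z < x}.
  The sign of a chain is multiplicative under this splitting, so
    \<chi>((-\<infinity>, x)_P) = \<chi>((-\<infinity>, x)_Q) + \<Sum>m \<in> (-\<infinity>, x)_P - Q. \<chi>((-\<infinity>, m)_Q) * \<chi>(T_m).
  Each such m is itself a point of (P \<union> {\<infinity>}) - Q strictly below x, so this linear system
  relating the two families of Euler characteristics is unitriangular, and one family
  vanishes identically iff the other does.\<close>

lemma finite_posetD:
  assumes "finite_poset P le"
  shows finite_poset_finite: "finite P"
    and finite_poset_refl: "x \<in> P \<Longrightarrow> le x x"
    and finite_poset_antisym: "\<lbrakk>x \<in> P; y \<in> P; le x y; le y x\<rbrakk> \<Longrightarrow> x = y"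
    and finite_poset_trans: "\<lbrakk>x \<in> P; y \<in> P; z \<in> P; le x y; le y z\<rbrakk> \<Longrightarrow> le x z"
  using assms unfolding finite_poset_def by blast+

lemma finite_poset_subset: "finite_poset P le \<Longrightarrow> S \<subseteq> P \<Longrightarrow> finite_poset S le"
  unfolding finite_poset_def by (blast intro: finite_subset)

lemma poset_ideal_subset: "poset_ideal P le Q \<Longrightarrow> Q \<subseteq> P"
  by (simp add: poset_ideal_def)

lemma finite_chains_of: "finite S \<Longrightarrow> finite (chains_of S le)"
  unfolding chains_of_def by (rule finite_subset[of _ "Pow S"]) auto

lemma chain_has_least:
  assumes "finite_poset P le" and "\<sigma> \<in> chains_of P le" and "\<sigma> \<noteq> {}"
  shows "\<exists>m\<in>\<sigma>. \<forall>z\<in>\<sigma>. le m z"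
proof -
  have "finite \<sigma>"
    using assms(1,2) finite_poset_finite finite_subset by (auto simp: chains_of_def)
  from this \<open>\<sigma> \<noteq> {}\<close> assms(2) show ?thesis
  proof (induction \<sigma> rule: finite_ne_induct)
    case (singleton x)
    then show ?case using finite_poset_refl[OF assms(1)] by (auto simp: chains_of_def)
  next
    case (insert a F)
    then have "F \<in> chains_of P le" by (auto simp: chains_of_def)
    with insert.IH obtain m where m: "m \<in> F" "\<forall>z\<in>F. le m z" by auto
    have "a \<in> P" "F \<subseteq> P" "le a m \<or> le m a"
      using insert.prems m(1) by (auto simp: chains_of_def)
    then show ?case
    proof (elim disjE)
      assume "le a m"
      then have "\<forall>z\<in>F. le a z"
        using m \<open>a \<in> P\<close> \<open>F \<subseteq> P\<close> finite_poset_trans[OF assms(1)] by blast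
      then show ?case using finite_poset_refl[OF assms(1) \<open>a \<in> P\<close>] by auto
    qed (use m in auto)
  qed
qed

definition strictly_below :: "'a set \<Rightarrow> ('a \<Rightarrow> 'a \<Rightarrow> bool) \<Rightarrow> 'a \<Rightarrow> 'a set" where
  "strictly_below S le m = {y \<in> S. le y m \<and> y \<noteq> m}"

definition strictly_above :: "'a set \<Rightarrow> ('a \<Rightarrow> 'a \<Rightarrow> bool) \<Rightarrow> 'a \<Rightarrow> 'a set" where
  "strictly_above S le m = {z \<in> S. le m z \<and> m \<noteq> z}"

lemma chain_join_in_chains_of:
  assumes D: "finite_poset D le" and "Q \<subseteq> D" and "m \<in> D - Q"
    and \<rho>: "\<rho> \<in> chains_of (strictly_below Q le m) le"
    and \<tau>: "\<tau> \<in> chains_of (strictly_above (D - Q) le m) le"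
  shows "\<rho> \<union> insert m \<tau> \<in> chains_of D le"
proof -
  have sub: "\<rho> \<subseteq> D" "\<tau> \<subseteq> D" and below: "\<forall>y\<in>\<rho>. le y m" and above: "\<forall>z\<in>\<tau>. le m z"
    using \<rho> \<tau> \<open>Q \<subseteq> D\<close> by (auto simp: chains_of_def strictly_below_def strictly_above_def)
  have "le y z" if "y \<in> \<rho>" "z \<in> \<tau>" for y z
    using finite_poset_trans[OF D, of y m z] that sub below above \<open>m \<in> D - Q\<close> by blast
  moreover have "le m m" using finite_poset_refl[OF D] \<open>m \<in> D - Q\<close> by blast
  ultimately show ?thesis
    using \<rho> \<tau> sub below above \<open>m \<in> D - Q\<close> unfolding chains_of_def by blast
qed

lemma bij_betw_chain_join:
  assumes D: "finite_poset D le" and Q: "poset_ideal D le Q"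
  shows "bij_betw (\<lambda>(m, \<rho>, \<tau>). \<rho> \<union> insert m \<tau>)
    (SIGMA m:D - Q. chains_of (strictly_below Q le m) le \<times> chains_of (strictly_above (D - Q) le m) le)
    {\<sigma> \<in> chains_of D le. \<sigma> - Q \<noteq> {}}"
    (is "bij_betw ?join ?J ?C")
proof -
  have "Q \<subseteq> D" using Q by (rule poset_ideal_subset)
  have parts: "(\<rho> \<union> insert m \<tau>) \<inter> Q = \<rho>" "(\<rho> \<union> insert m \<tau>) - Q - {m} = \<tau>"
    "m \<in> (\<rho> \<union> insert m \<tau>) - Q" "\<forall>z \<in> (\<rho> \<union> insert m \<tau>) - Q. le m z"
    if "(m, \<rho>, \<tau>) \<in> ?J" for m \<rho> \<tau>
    using that finite_poset_refl[OF D]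
    by (auto simp: chains_of_def strictly_below_def strictly_above_def)
  show ?thesis
  proof (rule bij_betw_imageI)
    show "inj_on ?join ?J"
    proof (rule inj_onI)
      fix a a' assume "a \<in> ?J" "a' \<in> ?J" and eq: "?join a = ?join a'"
      obtain m \<rho> \<tau> m' \<rho>' \<tau>' where a: "a = (m, \<rho>, \<tau>)" "a' = (m', \<rho>', \<tau>')"
        by (cases a, cases a') auto
      with \<open>a \<in> ?J\<close> \<open>a' \<in> ?J\<close> have J: "(m, \<rho>, \<tau>) \<in> ?J" "(m', \<rho>', \<tau>') \<in> ?J" by simp_all
      from eq a have eq': "\<rho> \<union> insert m \<tau> = \<rho>' \<union> insert m' \<tau>'" by simp
      have "m \<in> D" "m' \<in> D" using J by auto
      then have "m = m'"
        using parts[OF J(1)] parts[OF J(2)] eq' finite_poset_antisym[OF D] by metis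
      then show "a = a'"
        using parts[OF J(1)] parts[OF J(2)] eq' a by metis
    qed
    show "?join ` ?J = ?C"
    proof
      show "?join ` ?J \<subseteq> ?C"
        using chain_join_in_chains_of[OF D \<open>Q \<subseteq> D\<close>] parts by fastforce
      show "?C \<subseteq> ?join ` ?J"
      proof
        fix \<sigma> assume \<sigma>: "\<sigma> \<in> ?C"
        then have "\<sigma> - Q \<in> chains_of D le" by (auto simp: chains_of_def)
        then obtain m where m: "m \<in> \<sigma> - Q" "\<forall>z\<in>\<sigma> - Q. le m z"
          using chain_has_least[OF D] \<sigma> by blast
        have "\<not> le m y" if "y \<in> \<sigma> \<inter> Q" for y
          using Q m(1) \<sigma> that unfolding poset_ideal_def chains_of_def by blast
        then have "(m, \<sigma> \<inter> Q, \<sigma> - Q - {m}) \<in> ?J"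
          using \<sigma> m unfolding chains_of_def strictly_below_def strictly_above_def by blast
        moreover have "\<sigma> = ?join (m, \<sigma> \<inter> Q, \<sigma> - Q - {m})" using m(1) by auto
        ultimately show "\<sigma> \<in> ?join ` ?J" by blast
      qed
    qed
  qed
qed

lemma minus_power_card_join:
  assumes "finite \<rho>" "finite \<tau>" "\<rho> \<inter> insert m \<tau> = {}" "m \<notin> \<tau>"
  shows "- ((-1::int) ^ card (\<rho> \<union> insert m \<tau>)) = (- ((-1) ^ card \<rho>)) * (- ((-1) ^ card \<tau>))"
proof -
  have "card (\<rho> \<union> insert m \<tau>) = card \<rho> + card \<tau> + 1"
    using assms by (simp add: card_Un_disjoint)
  then show ?thesis by (simp add: power_add)
qed

lemma red_euler_ideal_decomposition:
  assumes D: "finite_poset D le" and Q: "poset_ideal D le Q"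
  shows "red_euler D le = red_euler Q le +
    (\<Sum>m\<in>D - Q. red_euler (strictly_below Q le m) le * red_euler (strictly_above (D - Q) le m) le)"
proof -
  define sign :: "'a set \<Rightarrow> int" where "sign \<sigma> = - ((-1) ^ card \<sigma>)" for \<sigma>
  have red_euler_sign: "red_euler S le = sum sign (chains_of S le)" for S
    by (simp add: red_euler_def sign_def)
  have "finite D" using D by (rule finite_poset_finite)
  have "Q \<subseteq> D" using Q by (rule poset_ideal_subset)
  define below where "below m = chains_of (strictly_below Q le m) le" for m
  define above where "above m = chains_of (strictly_above (D - Q) le m) le" for m
  have fin_below: "finite (below m)" and fin_above: "finite (above m)" for m
    unfolding below_def above_def strictly_below_def strictly_above_def
    using \<open>finite D\<close> \<open>Q \<subseteq> D\<close> by (auto intro!: finite_chains_of intro: finite_subset)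
  let ?C = "{\<sigma> \<in> chains_of D le. \<sigma> - Q \<noteq> {}}"
  have split: "chains_of D le = chains_of Q le \<union> ?C" and "chains_of Q le \<inter> ?C = {}"
    using \<open>Q \<subseteq> D\<close> by (auto simp: chains_of_def)
  moreover have "finite (chains_of Q le)" "finite ?C"
    using finite_chains_of[OF \<open>finite D\<close>, of le] finite_chains_of[OF finite_subset[OF \<open>Q \<subseteq> D\<close> \<open>finite D\<close>]]
    by auto
  ultimately have "red_euler D le = red_euler Q le + sum sign ?C"
    unfolding red_euler_sign by (subst split) (rule sum.union_disjoint)
  also have "sum sign ?C = (\<Sum>(m, \<rho>, \<tau>) \<in> (SIGMA m:D - Q. below m \<times> above m). sign (\<rho> \<union> insert m \<tau>))"
    using sum.reindex_bij_betw[OF bij_betw_chain_join[OF D Q], of sign]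
    by (simp add: below_def above_def case_prod_unfold)
  also have "\<dots> = (\<Sum>m\<in>D - Q. \<Sum>(\<rho>, \<tau>) \<in> below m \<times> above m. sign (\<rho> \<union> insert m \<tau>))"
    using sum.Sigma[of "D - Q" "\<lambda>m. below m \<times> above m" "\<lambda>m (\<rho>, \<tau>). sign (\<rho> \<union> insert m \<tau>)"]
      \<open>finite D\<close> fin_below fin_above by (simp add: case_prod_unfold)
  also have "\<dots> = (\<Sum>m\<in>D - Q. \<Sum>(\<rho>, \<tau>) \<in> below m \<times> above m. sign \<rho> * sign \<tau>)"
  proof (intro sum.cong refl, clarify)
    fix m \<rho> \<tau> assume "m \<in> D" "m \<notin> Q" "\<rho> \<in> below m" "\<tau> \<in> above m"
    then have "\<rho> \<subseteq> Q" "\<tau> \<subseteq> D - Q" "m \<notin> \<tau>"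
      by (auto simp: below_def above_def chains_of_def strictly_below_def strictly_above_def)
    then show "sign (\<rho> \<union> insert m \<tau>) = sign \<rho> * sign \<tau>"
      unfolding sign_def using \<open>m \<notin> Q\<close> \<open>finite D\<close> \<open>Q \<subseteq> D\<close>
      by (intro minus_power_card_join) (auto intro: finite_subset)
  qed
  also have "\<dots> = (\<Sum>m\<in>D - Q. sum sign (below m) * sum sign (above m))"
    by (simp add: sum_product sum.cartesian_product)
  finally show ?thesis by (simp add: red_euler_sign below_def above_def)
qed

lemma ext_less_trans:
  assumes P: "finite_poset P le" and "y \<in> P" "m \<in> P" "x \<in> Some ` P \<union> {None}"
    and "ext_less le (Some y) (Some m)" "ext_less le (Some m) x"
  shows "ext_less le (Some y) x"
proof (cases x)
  case (Some p)
  then have "p \<in> P" "le y m" "y \<noteq> m" "le m p" "m \<noteq> p" using assms(4-6) by auto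
  then have "le y p" "y \<noteq> p"
    using finite_poset_trans[OF P] finite_poset_antisym[OF P] \<open>y \<in> P\<close> \<open>m \<in> P\<close> by blast+
  then show ?thesis using Some by simp
qed simp

lemma card_down_set_less:
  assumes P: "finite_poset P le" and "m \<in> P" "x \<in> Some ` P \<union> {None}" "ext_less le (Some m) x"
  shows "card {z \<in> P. ext_less le (Some z) (Some m)} < card {z \<in> P. ext_less le (Some z) x}"
proof (rule psubset_card_mono)
  show "finite {z \<in> P. ext_less le (Some z) x}" using finite_poset_finite[OF P] by simp
  show "{z \<in> P. ext_less le (Some z) (Some m)} \<subset> {z \<in> P. ext_less le (Some z) x}"
    using ext_less_trans[OF P _ \<open>m \<in> P\<close> \<open>x \<in> _\<close> _ \<open>ext_less le (Some m) x\<close>] assms(2,4)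
    by auto
qed

lemma red_euler_down_set_decomposition:
  assumes P: "finite_poset P le" and Q: "poset_ideal P le Q" and x: "x \<in> Some ` P \<union> {None}"
  defines "D \<equiv> {z \<in> P. ext_less le (Some z) x}"
  shows "red_euler D le = red_euler {y \<in> Q. ext_less le (Some y) x} le +
    (\<Sum>m\<in>D - Q. red_euler {y \<in> Q. ext_less le (Some y) (Some m)} le *
                red_euler (strictly_above (D - Q) le m) le)"
proof -
  have "Q \<subseteq> P" using Q by (rule poset_ideal_subset)
  have "finite_poset D le" using P by (rule finite_poset_subset) (simp add: D_def)
  moreover have "poset_ideal D le (D \<inter> Q)"
    using Q by (auto simp: poset_ideal_def D_def)
  ultimately have "red_euler D le = red_euler (D \<inter> Q) le +
      (\<Sum>m\<in>D - D \<inter> Q. red_euler (strictly_below (D \<inter> Q) le m) le *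
                        red_euler (strictly_above (D - D \<inter> Q) le m) le)"
    by (rule red_euler_ideal_decomposition)
  also have "D - D \<inter> Q = D - Q" by blast
  also have "(\<Sum>m\<in>D - Q. red_euler (strictly_below (D \<inter> Q) le m) le *
                      red_euler (strictly_above (D - Q) le m) le) =
      (\<Sum>m\<in>D - Q. red_euler {y \<in> Q. ext_less le (Some y) (Some m)} le *
                  red_euler (strictly_above (D - Q) le m) le)"
  proof (intro sum.cong refl arg_cong2[where f = "(*)"] arg_cong[where f = "\<lambda>S. red_euler S le"])
    show "strictly_below (D \<inter> Q) le m = {y \<in> Q. ext_less le (Some y) (Some m)}"
      if "m \<in> D - Q" for m
      using that \<open>Q \<subseteq> P\<close> ext_less_trans[OF P _ _ x]
      by (auto simp: D_def strictly_below_def)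
  qed
  also have "D \<inter> Q = {y \<in> Q. ext_less le (Some y) x}"
    using \<open>Q \<subseteq> P\<close> by (auto simp: D_def)
  finally show ?thesis .
qed

lemma vanishing_iff_unitriangular:
  fixes f g :: "'b \<Rightarrow> 'r::semiring_0" and \<mu> :: "'b \<Rightarrow> nat"
  assumes expand: "\<And>x. x \<in> X \<Longrightarrow> f x = g x + (\<Sum>m\<in>S x. g (h m) * c x m)"
    and smaller: "\<And>x m. x \<in> X \<Longrightarrow> m \<in> S x \<Longrightarrow> h m \<in> X \<and> \<mu> (h m) < \<mu> x"
  shows "(\<forall>x\<in>X. g x = 0) \<longleftrightarrow> (\<forall>x\<in>X. f x = 0)"
proof
  assume "\<forall>x\<in>X. g x = 0"
  then show "\<forall>x\<in>X. f x = 0" using expand smaller by simp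
next
  assume f: "\<forall>x\<in>X. f x = 0"
  have "g x = 0" if "x \<in> X" for x
    using that
  proof (induction x rule: measure_induct_rule[where f = \<mu>])
    case (less x)
    then have "\<forall>m\<in>S x. g (h m) = 0" using smaller by blast
    then show ?case using expand[OF less.prems] f less.prems by simp
  qed
  then show "\<forall>x\<in>X. g x = 0" by blast
qed

theorem lemma6p10:
  fixes P Q :: "'a set" and le :: "'a \<Rightarrow> 'a \<Rightarrow> bool"
  assumes "finite_poset P le"
    and "poset_ideal P le Q"
  shows "(\<forall>x \<in> (Some ` P \<union> {None}) - Some ` Q.
            red_euler {y \<in> Q. ext_less le (Some y) x} le = 0)
     \<longleftrightarrow> (\<forall>x \<in> (Some ` P \<union> {None}) - Some ` Q.
            red_euler {z \<in> P. ext_less le (Some z) x} le = 0)"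
    (is "(\<forall>x \<in> ?X. red_euler (?A x) le = 0) \<longleftrightarrow> (\<forall>x \<in> ?X. red_euler (?B x) le = 0)")
proof (rule vanishing_iff_unitriangular)
  show "red_euler (?B x) le = red_euler (?A x) le +
      (\<Sum>m\<in>?B x - Q. red_euler (?A (Some m)) le * red_euler (strictly_above (?B x - Q) le m) le)"
    if "x \<in> ?X" for x
    using red_euler_down_set_decomposition[OF assms] that by blast
  show "Some m \<in> ?X \<and> card (?B (Some m)) < card (?B x)" if "x \<in> ?X" "m \<in> ?B x - Q" for x m
    using card_down_set_less[OF assms(1)] that by blast
qed

end
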